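(* Let $S,T$ be left inverse semi-braces whose associated maps $r_S$ and $r_T$ are solutions, and let $\sigma:T\to\mathrm{Aut}(S)$ be a homomorphism from $(T,\cdot)$ into the automorphism group of the left inverse semi-brace $S$; write ${}^ua=\sigma(u)(a)$. Let $B=S\rtimes_\sigma T$ be the semidirect product. Then the map $r_B$ associated to $B$, which is given by $$r_B((a,u),(b,v))=\left(\left({}^u\lambda_{{}^{u^{-1}}a}(b),\,\lambda_u(v)\right),\ \left({}^{\lambda_u(v)^{-1}}\rho_{{}^ub}(a),\,\rho_v(u)\right)\right)$$ for all $(a,u),(b,v)\in S\times T$, is a solution.
   Context: An inverse semigroup is a semigroup $(S,\cdot)$ in which for each $a$ there is a unique $a^{-1}$ with $aa^{-1}a=a$, $a^{-1}aa^{-1}=a^{-1}$. A left inverse semi-brace is a triple $(S,+,\cdot)$ with $(S,+)$ a semigroup, $(S,\cdot)$ an inverse semigroup and $a(b+c)=ab+a(a^{-1}+c)$ for all $a,b,c$. In it set $\lambda_a(b)=a(a^{-1}+b)$, $\rho_b(a)=(a^{-1}+b)^{-1}b$; the map associated to $S$ is $r_S(a,b)=(\lambda_a(b),\rho_b(a))$. A solution is a map $r:X\times X\to X\times X$ with $(r\times\mathrm{id})(\mathrm{id}\times r)(r\times\mathrm{id})=(\mathrm{id}\times r)(r\times\mathrm{id})(\mathrm{id}\times r)$. An automorphism of the left inverse semi-brace $S$ is a bijection preserving both operations. The semidirect product $S\rtimes_\sigma T$ is $S\times T$ with $(a,u)+(b,v)=(a+b,u+v)$ and $(a,u)(b,v)=(a\,{}^ub,uv)$;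 it is a left inverse semi-brace and $r_B$ is its associated map. *)

theory Defs
  imports Main
begin

definition is_semigroup :: "('a \<Rightarrow> 'a \<Rightarrow> 'a) \<Rightarrow> bool" where
  "is_semigroup m \<longleftrightarrow> (\<forall>a b c. m (m a b) c = m a (m b c))"

definition is_inverse_semigroup :: "('a \<Rightarrow> 'a \<Rightarrow> 'a) \<Rightarrow> bool" where
  "is_inverse_semigroup m \<longleftrightarrow> is_semigroup m \<and>
     (\<forall>a. \<exists>!x. m (m a x) a = a \<and> m (m x a) x = x)"

definition inv_of :: "('a \<Rightarrow> 'a \<Rightarrow> 'a) \<Rightarrow> 'a \<Rightarrow> 'a" where
  "inv_of m a = (THE x. m (m a x) a = a \<and> m (m x a) x = x)"

definition left_inverse_semi_brace :: "('a \<Rightarrow> 'a \<Rightarrow> 'a) \<Rightarrow> ('a \<Rightarrow> 'a \<Rightarrow> 'a) \<Rightarrow> bool" where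
  "left_inverse_semi_brace add mult \<longleftrightarrow> is_semigroup add \<and> is_inverse_semigroup mult \<and>
     (\<forall>a b c. mult a (add b c) = add (mult a b) (mult a (add (inv_of mult a) c)))"

definition lam :: "('a \<Rightarrow> 'a \<Rightarrow> 'a) \<Rightarrow> ('a \<Rightarrow> 'a \<Rightarrow> 'a) \<Rightarrow> 'a \<Rightarrow> 'a \<Rightarrow> 'a" where
  "lam add mult a b = mult a (add (inv_of mult a) b)"

definition rho :: "('a \<Rightarrow> 'a \<Rightarrow> 'a) \<Rightarrow> ('a \<Rightarrow> 'a \<Rightarrow> 'a) \<Rightarrow> 'a \<Rightarrow> 'a \<Rightarrow> 'a" where
  "rho add mult b a = mult (inv_of mult (add (inv_of mult a) b)) b"

definition assoc_map :: "('a \<Rightarrow> 'a \<Rightarrow> 'a) \<Rightarrow> ('a \<Rightarrow> 'a \<Rightarrow> 'a) \<Rightarrow> 'a \<times> 'a \<Rightarrow> 'a \<times> 'a" where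
  "assoc_map add mult = (\<lambda>(a, b). (lam add mult a b, rho add mult b a))"

definition is_solution :: "('x \<times> 'x \<Rightarrow> 'x \<times> 'x) \<Rightarrow> bool" where
  "is_solution r \<longleftrightarrow>
     (\<forall>x y z.
        (let r12 = (\<lambda>(a, b, c). (fst (r (a, b)), snd (r (a, b)), c));
             r23 = (\<lambda>(a, b, c). (a, fst (r (b, c)), snd (r (b, c))))
         in r12 (r23 (r12 (x, y, z))) = r23 (r12 (r23 (x, y, z)))))"

definition semi_brace_aut :: "('a \<Rightarrow> 'a \<Rightarrow> 'a) \<Rightarrow> ('a \<Rightarrow> 'a \<Rightarrow> 'a) \<Rightarrow> ('a \<Rightarrow> 'a) \<Rightarrow> bool" where
  "semi_brace_aut add mult f \<longleftrightarrow> bij f \<and>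
     (\<forall>a b. f (add a b) = add (f a) (f b)) \<and> (\<forall>a b. f (mult a b) = mult (f a) (f b))"

definition sd_add :: "('a \<Rightarrow> 'a \<Rightarrow> 'a) \<Rightarrow> ('b \<Rightarrow> 'b \<Rightarrow> 'b) \<Rightarrow> 'a \<times> 'b \<Rightarrow> 'a \<times> 'b \<Rightarrow> 'a \<times> 'b" where
  "sd_add addS addT p q = (addS (fst p) (fst q), addT (snd p) (snd q))"

definition sd_mult :: "('a \<Rightarrow> 'a \<Rightarrow> 'a) \<Rightarrow> ('b \<Rightarrow> 'b \<Rightarrow> 'b) \<Rightarrow> ('b \<Rightarrow> 'a \<Rightarrow> 'a)
    \<Rightarrow> 'a \<times> 'b \<Rightarrow> 'a \<times> 'b \<Rightarrow> 'a \<times> 'b" where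
  "sd_mult multS multT \<sigma> p q = (multS (fst p) (\<sigma> (snd p) (fst q)), multT (snd p) (snd q))"

end

theory Submission
  imports Defs
begin

text \<open>
  Untwist a triple \<open>((a,u),(b,v),(c,t))\<close> of elements of \<open>B\<close> to the pair of triples
  \<open>(a, \<sigma>(u) b, \<sigma>(uv) c)\<close> and \<open>(u,v,t)\<close>. This injective change of coordinates turns
  \<open>r\<^sub>B \<times> id\<close> and \<open>id \<times> r\<^sub>B\<close> into \<open>r\<^sub>S \<times> id\<close>, \<open>r\<^sub>T \<times> id\<close> and \<open>id \<times> r\<^sub>S\<close>, \<open>id \<times> r\<^sub>T\<close>
  acting side by side, so the braid relation for \<open>r\<^sub>B\<close> is inherited from those of \<open>r\<^sub>S\<close>
  and \<open>r\<^sub>T\<close>. The twists match because \<open>\<sigma>(\<lambda>\<^sub>u(v)) \<circ> \<sigma>(\<rho>\<^sub>v(u)) = \<sigma>(u) \<circ> \<sigma>(v)\<close>, which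
  holds since \<open>\<sigma>(w) \<circ> \<sigma>(w\<inverse>)\<close> is the identity.
  Only the inverse semigroup structure of \<open>(S,\<cdot>)\<close> and \<open>(T,\<cdot>)\<close> is used, not the
  semi-brace compatibility law.
\<close>

lemma inverse_semigroup_inv_of:
  assumes "is_inverse_semigroup m"
  shows "m (m a (inv_of m a)) a = a" and "m (m (inv_of m a) a) (inv_of m a) = inv_of m a"
proof -
  have "\<exists>!x. m (m a x) a = a \<and> m (m x a) x = x"
    using assms unfolding is_inverse_semigroup_def by blast
  from theI'[OF this] show "m (m a (inv_of m a)) a = a" "m (m (inv_of m a) a) (inv_of m a) = inv_of m a"
    unfolding inv_of_def by auto
qed

lemma inverse_semigroup_inv_of_eqI:
  assumes "is_inverse_semigroup m" and "m (m a x) a = a" and "m (m x a) x = x"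
  shows "inv_of m a = x"
proof -
  have "\<exists>!x. m (m a x) a = a \<and> m (m x a) x = x"
    using assms(1) unfolding is_inverse_semigroup_def by blast
  then show ?thesis
    unfolding inv_of_def using assms(2,3) by (intro the1_equality) auto
qed

lemma inv_of_hom:
  assumes "is_inverse_semigroup m" and "is_inverse_semigroup m'"
    and hom: "\<And>a b. f (m a b) = m' (f a) (f b)"
  shows "f (inv_of m a) = inv_of m' (f a)"
proof (rule inverse_semigroup_inv_of_eqI[OF assms(2), symmetric])
  show "m' (m' (f a) (f (inv_of m a))) (f a) = f a"
    using inverse_semigroup_inv_of(1)[OF assms(1), of a] by (metis hom)
  show "m' (m' (f (inv_of m a)) (f a)) (f (inv_of m a)) = f (inv_of m a)"
    using inverse_semigroup_inv_of(2)[OF assms(1), of a] by (metis hom)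
qed

lemma lam_hom:
  assumes "is_inverse_semigroup mult" and "is_inverse_semigroup mult'"
    and "\<And>a b. f (add a b) = add' (f a) (f b)" and "\<And>a b. f (mult a b) = mult' (f a) (f b)"
  shows "f (lam add mult a b) = lam add' mult' (f a) (f b)"
proof -
  have "f (inv_of mult x) = inv_of mult' (f x)" for x
    by (rule inv_of_hom[OF assms(1,2)]) (rule assms(4))
  then show ?thesis
    unfolding lam_def by (simp add: assms(3,4))
qed

lemma rho_hom:
  assumes "is_inverse_semigroup mult" and "is_inverse_semigroup mult'"
    and "\<And>a b. f (add a b) = add' (f a) (f b)" and "\<And>a b. f (mult a b) = mult' (f a) (f b)"
  shows "f (rho add mult b a) = rho add' mult' (f b) (f a)"
proof -
  have "f (inv_of mult x) = inv_of mult' (f x)" for x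
    by (rule inv_of_hom[OF assms(1,2)]) (rule assms(4))
  then show ?thesis
    unfolding rho_def by (simp add: assms(3,4))
qed

definition r12 :: "('x \<times> 'x \<Rightarrow> 'x \<times> 'x) \<Rightarrow> 'x \<times> 'x \<times> 'x \<Rightarrow> 'x \<times> 'x \<times> 'x" where
  "r12 r = (\<lambda>(a, b, c). (fst (r (a, b)), snd (r (a, b)), c))"

definition r23 :: "('x \<times> 'x \<Rightarrow> 'x \<times> 'x) \<Rightarrow> 'x \<times> 'x \<times> 'x \<Rightarrow> 'x \<times> 'x \<times> 'x" where
  "r23 r = (\<lambda>(a, b, c). (a, fst (r (b, c)), snd (r (b, c))))"

lemma is_solution_iff_braid: "is_solution r \<longleftrightarrow> r12 r \<circ> r23 r \<circ> r12 r = r23 r \<circ> r12 r \<circ> r23 r"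
  unfolding is_solution_def r12_def r23_def Let_def by (auto simp: fun_eq_iff)

lemma braid_relation_transfer:
  assumes "inj \<Phi>" and "\<Phi> \<circ> f = F \<circ> \<Phi>" and "\<Phi> \<circ> g = G \<circ> \<Phi>"
    and "F \<circ> G \<circ> F = G \<circ> F \<circ> G"
  shows "f \<circ> g \<circ> f = g \<circ> f \<circ> g"
proof -
  have "\<Phi> (f x) = F (\<Phi> x)" and "\<Phi> (g x) = G (\<Phi> x)" for x
    using assms(2,3) by (metis comp_apply)+
  then have "\<Phi> (f (g (f x))) = \<Phi> (g (f (g x)))" for x
    using fun_cong[OF assms(4), of "\<Phi> x"] by simp
  with assms(1) show ?thesis
    by (simp add: fun_eq_iff inj_eq)
qed

locale inverse_semigroup_action =
  fixes addS multS :: "'a \<Rightarrow> 'a \<Rightarrow> 'a"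
    and addT multT :: "'b \<Rightarrow> 'b \<Rightarrow> 'b"
    and \<sigma> :: "'b \<Rightarrow> 'a \<Rightarrow> 'a"
  assumes inverse_semigroup_S: "is_inverse_semigroup multS"
    and inverse_semigroup_T: "is_inverse_semigroup multT"
    and aut: "\<And>u. semi_brace_aut addS multS (\<sigma> u)"
    and action: "\<And>u v. \<sigma> (multT u v) = \<sigma> u \<circ> \<sigma> v"
begin

abbreviation "invS \<equiv> inv_of multS"
abbreviation "invT \<equiv> inv_of multT"
abbreviation "lamS \<equiv> lam addS multS"
abbreviation "rhoS \<equiv> rho addS multS"
abbreviation "lamT \<equiv> lam addT multT"
abbreviation "rhoT \<equiv> rho addT multT"
abbreviation "addB \<equiv> sd_add addS addT"
abbreviation "multB \<equiv> sd_mult multS multT \<sigma>"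

lemma \<sigma>_add [simp]: "\<sigma> u (addS a b) = addS (\<sigma> u a) (\<sigma> u b)"
  and \<sigma>_mult [simp]: "\<sigma> u (multS a b) = multS (\<sigma> u a) (\<sigma> u b)"
  using aut unfolding semi_brace_aut_def by auto

lemma \<sigma>_eq_iff: "\<sigma> u x = \<sigma> u y \<longleftrightarrow> x = y"
  using aut[of u] unfolding semi_brace_aut_def bij_def by (auto dest: injD)

lemma \<sigma>_multT [simp]: "\<sigma> (multT u v) x = \<sigma> u (\<sigma> v x)"
  using action by simp

lemma \<sigma>_invS [simp]: "\<sigma> u (invS a) = invS (\<sigma> u a)"
  using inv_of_hom[OF inverse_semigroup_S inverse_semigroup_S, of "\<sigma> u"] by simp

lemma \<sigma>_lamS [simp]: "\<sigma> u (lamS a b) = lamS (\<sigma> u a) (\<sigma> u b)"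
  using lam_hom[OF inverse_semigroup_S inverse_semigroup_S, of "\<sigma> u"] by simp

lemma \<sigma>_rhoS [simp]: "\<sigma> u (rhoS b a) = rhoS (\<sigma> u b) (\<sigma> u a)"
  using rho_hom[OF inverse_semigroup_S inverse_semigroup_S, of "\<sigma> u"] by simp

text \<open>Injectivity of \<open>\<sigma> u\<close> cancels \<open>\<sigma> u\<close> from \<open>\<sigma> (u u\<inverse> u) = \<sigma> u\<close>, and likewise for \<open>u\<inverse>\<close>.\<close>

lemma \<sigma>_invT_cancel [simp]: "\<sigma> (invT u) (\<sigma> u x) = x"
proof -
  have "\<sigma> u (\<sigma> (invT u) (\<sigma> u x)) = \<sigma> u x"
    using inverse_semigroup_inv_of(1)[OF inverse_semigroup_T, of u] \<sigma>_multT by metis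
  then show ?thesis by (simp only: \<sigma>_eq_iff)
qed

lemma \<sigma>_cancel_invT [simp]: "\<sigma> u (\<sigma> (invT u) x) = x"
proof -
  have "\<sigma> (invT u) (\<sigma> u (\<sigma> (invT u) x)) = \<sigma> (invT u) x"
    using inverse_semigroup_inv_of(2)[OF inverse_semigroup_T, of u] \<sigma>_multT by metis
  then show ?thesis by (simp only: \<sigma>_eq_iff)
qed

lemma \<sigma>_invT_multT: "\<sigma> (invT (multT u w)) x = \<sigma> (invT w) (\<sigma> (invT u) x)"
proof -
  have "\<sigma> (multT u w) (\<sigma> (invT (multT u w)) x) = \<sigma> (multT u w) (\<sigma> (invT w) (\<sigma> (invT u) x))"
    by (simp del: \<sigma>_multT) simp
  then show ?thesis by (simp only: \<sigma>_eq_iff)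
qed

lemma \<sigma>_lamT_rhoT [simp]: "\<sigma> (lamT u v) (\<sigma> (rhoT v u) x) = \<sigma> u (\<sigma> v x)"
  unfolding lam_def rho_def by simp

lemma inv_of_semidirect: "inv_of multB (a, u) = (\<sigma> (invT u) (invS a), invT u)"
  unfolding inv_of_def[of multB]
proof (rule the_equality)
  show "multB (multB (a, u) (\<sigma> (invT u) (invS a), invT u)) (a, u) = (a, u) \<and>
    multB (multB (\<sigma> (invT u) (invS a), invT u) (a, u)) (\<sigma> (invT u) (invS a), invT u) =
      (\<sigma> (invT u) (invS a), invT u)"
    by (simp add: sd_mult_def inverse_semigroup_inv_of[OF inverse_semigroup_S]
        inverse_semigroup_inv_of[OF inverse_semigroup_T])
next
  fix p
  assume "multB (multB (a, u) p) (a, u) = (a, u) \<and> multB (multB p (a, u)) p = p"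
  moreover obtain x w where p: "p = (x, w)" by (cases p)
  ultimately have w1: "multT (multT u w) u = u" and w2: "multT (multT w u) w = w"
    and x1: "multS (multS a (\<sigma> u x)) (\<sigma> (multT u w) a) = a"
    and x2: "multS (multS x (\<sigma> w a)) (\<sigma> (multT w u) x) = x"
    by (simp_all add: sd_mult_def del: \<sigma>_multT)
  have w: "w = invT u"
    using inverse_semigroup_inv_of_eqI[OF inverse_semigroup_T w1 w2] by simp
  have "multS (multS a (\<sigma> u x)) a = a"
    using x1 unfolding w by simp
  moreover have "multS (multS (\<sigma> u x) a) (\<sigma> u x) = \<sigma> u x"
    using arg_cong[OF x2, of "\<sigma> u"] unfolding w by (simp del: \<sigma>_invS)
  ultimately have "invS a = \<sigma> u x"
    by (rule inverse_semigroup_inv_of_eqI[OF inverse_semigroup_S])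
  then show "p = (\<sigma> (invT u) (invS a), invT u)"
    using p w by simp
qed

lemma lam_semidirect: "lam addB multB (a, u) (b, v) = (lamS a (\<sigma> u b), lamT u v)"
  unfolding lam_def inv_of_semidirect by (simp add: sd_add_def sd_mult_def)

lemma rho_semidirect: "rho addB multB (b, v) (a, u) = (\<sigma> (invT (lamT u v)) (rhoS (\<sigma> u b) a), rhoT v u)"
  unfolding rho_def lam_def
  by (simp add: sd_add_def sd_mult_def inv_of_semidirect \<sigma>_invT_multT)

definition untwist :: "('a \<times> 'b) \<times> ('a \<times> 'b) \<times> ('a \<times> 'b) \<Rightarrow> ('a \<times> 'a \<times> 'a) \<times> ('b \<times> 'b \<times> 'b)"
  where "untwist = (\<lambda>((a, u), (b, v), (c, t)). ((a, \<sigma> u b, \<sigma> (multT u v) c), (u, v, t)))"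

lemma inj_untwist: "inj untwist"
  by (auto simp: inj_def untwist_def \<sigma>_eq_iff)

lemma untwist_r12:
  "untwist \<circ> r12 (assoc_map addB multB) =
    map_prod (r12 (assoc_map addS multS)) (r12 (assoc_map addT multT)) \<circ> untwist"
  by (simp add: fun_eq_iff untwist_def r12_def assoc_map_def lam_semidirect rho_semidirect)

lemma untwist_r23:
  "untwist \<circ> r23 (assoc_map addB multB) =
    map_prod (r23 (assoc_map addS multS)) (r23 (assoc_map addT multT)) \<circ> untwist"
  by (simp add: fun_eq_iff untwist_def r23_def assoc_map_def lam_semidirect rho_semidirect)

lemma is_solution_assoc_map_semidirect:
  assumes "is_solution (assoc_map addS multS)" and "is_solution (assoc_map addT multT)"
  shows "is_solution (assoc_map addB multB)"
  using braid_relation_transfer[OF inj_untwist untwist_r12 untwist_r23] assms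
  by (simp add: is_solution_iff_braid map_prod_compose[symmetric])

end

theorem corollary34:
  fixes addS multS :: "'a \<Rightarrow> 'a \<Rightarrow> 'a"
    and addT multT :: "'b \<Rightarrow> 'b \<Rightarrow> 'b"
    and \<sigma> :: "'b \<Rightarrow> 'a \<Rightarrow> 'a"
  assumes "left_inverse_semi_brace addS multS"
    and "left_inverse_semi_brace addT multT"
    and "is_solution (assoc_map addS multS)"
    and "is_solution (assoc_map addT multT)"
    and "\<forall>u. semi_brace_aut addS multS (\<sigma> u)"
    and "\<forall>u v. \<sigma> (multT u v) = \<sigma> u \<circ> \<sigma> v"
  shows "is_solution (assoc_map (sd_add addS addT) (sd_mult multS multT \<sigma>))"
proof -
  interpret inverse_semigroup_action addS multS addT multT \<sigma>
    using assms(1,2,5,6) by unfold_locales (auto simp: left_inverse_semi_brace_def)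
  show ?thesis
    using assms(3,4) by (rule is_solution_assoc_map_semidirect)
qed

end
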